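(* For every $n\ge1$, the set of Tamari interval-posets of size $n$ is a sublattice of the lattice of integer posets on $[n]$ under the weak order on integer relations.
   Context: An integer relation of size $n$ is a reflexive binary relation $R$ on $[n]$, with $\mathrm{Inc}(R)=\{(a,b)\in R:a<b\}$, $\mathrm{Dec}(R)=\{(b,a)\in R:a<b\}$; the weak order on integer relations is $R\le S$ iff $\mathrm{Inc}(S)\subseteq\mathrm{Inc}(R)$ and $\mathrm{Dec}(R)\subseteq\mathrm{Dec}(S)$. An integer poset is an antisymmetric transitive integer relation; the integer posets on $[n]$ form a lattice under this order. A Tamari interval-poset of size $n$ is an integer poset $\triangleleft$ on $[n]$ such that for all $a<b<c$: $a\triangleleft c\Rightarrow b\triangleleft c$ and $c\triangleleft a\Rightarrow b\triangleleft a$. *)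

theory Defs
  imports Main
begin

definition int_rel :: "nat \<Rightarrow> (nat \<times> nat) set \<Rightarrow> bool" where
  "int_rel n R \<longleftrightarrow> R \<subseteq> {1..n} \<times> {1..n} \<and> (\<forall>x\<in>{1..n}. (x, x) \<in> R)"

definition Inc :: "(nat \<times> nat) set \<Rightarrow> (nat \<times> nat) set" where
  "Inc R = {(a, b). (a, b) \<in> R \<and> a < b}"

definition Dec :: "(nat \<times> nat) set \<Rightarrow> (nat \<times> nat) set" where
  "Dec R = {(b, a). (b, a) \<in> R \<and> a < b}"

definition weak_le :: "(nat \<times> nat) set \<Rightarrow> (nat \<times> nat) set \<Rightarrow> bool" where
  "weak_le R S \<longleftrightarrow> Inc S \<subseteq> Inc R \<and> Dec R \<subseteq> Dec S"

definition int_poset :: "nat \<Rightarrow> (nat \<times> nat) set \<Rightarrow> bool" where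
  "int_poset n R \<longleftrightarrow> int_rel n R \<and> antisym R \<and> trans R"

definition tamari_interval_poset :: "nat \<Rightarrow> (nat \<times> nat) set \<Rightarrow> bool" where
  "tamari_interval_poset n R \<longleftrightarrow> int_poset n R \<and>
     (\<forall>a b c. a < b \<and> b < c \<longrightarrow>
        ((a, c) \<in> R \<longrightarrow> (b, c) \<in> R) \<and> ((c, a) \<in> R \<longrightarrow> (b, a) \<in> R))"

definition ipos_meet :: "nat \<Rightarrow> (nat \<times> nat) set \<Rightarrow> (nat \<times> nat) set \<Rightarrow> (nat \<times> nat) set \<Rightarrow> bool" where
  "ipos_meet n R S M \<longleftrightarrow> int_poset n M \<and> weak_le M R \<and> weak_le M S \<and>
     (\<forall>X. int_poset n X \<and> weak_le X R \<and> weak_le X S \<longrightarrow> weak_le X M)"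

definition ipos_join :: "nat \<Rightarrow> (nat \<times> nat) set \<Rightarrow> (nat \<times> nat) set \<Rightarrow> (nat \<times> nat) set \<Rightarrow> bool" where
  "ipos_join n R S J \<longleftrightarrow> int_poset n J \<and> weak_le R J \<and> weak_le S J \<and>
     (\<forall>X. int_poset n X \<and> weak_le R X \<and> weak_le S X \<longrightarrow> weak_le J X)"

end

theory Submission
  imports Defs
begin

text \<open>
  For Tamari interval-posets R and S the meet is the transitive closure of
  Inc R \<union> Inc S, together with Dec R \<inter> Dec S and the diagonal.  For arbitrary
  integer posets this union need not be transitive; the two Tamari conditions are
  exactly what lets an increasing chain absorb a decreasing step (and vice versa),
  and they are inherited by the union.  The join then follows by symmetry: the
  mirror i \<mapsto> n + 1 - i exchanges increasing and decreasing relations, hence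
  reverses the weak order and preserves Tamari interval-posets, so it turns meets
  into joins.
\<close>

lemma tamari_interval_posetD:
  assumes "tamari_interval_poset n T"
  shows "T \<subseteq> {1..n} \<times> {1..n}" "antisym T" "trans T"
    and "\<And>a b c. a < b \<Longrightarrow> b < c \<Longrightarrow> (a, c) \<in> T \<Longrightarrow> (b, c) \<in> T"
    and "\<And>a b c. a < b \<Longrightarrow> b < c \<Longrightarrow> (c, a) \<in> T \<Longrightarrow> (b, a) \<in> T"
  using assms unfolding tamari_interval_poset_def int_poset_def int_rel_def by blast+

lemma trans_Inc: "trans R \<Longrightarrow> trans (Inc R)"
  unfolding Inc_def trans_def by auto

locale tamari_interval_poset_pair =
  fixes n :: nat and R S :: "(nat \<times> nat) set"
  assumes tamari_R: "tamari_interval_poset n R"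
    and tamari_S: "tamari_interval_poset n S"
begin

definition up :: "(nat \<times> nat) set" where
  "up = Inc R \<union> Inc S"

definition down :: "(nat \<times> nat) set" where
  "down = Dec R \<inter> Dec S"

definition meet_rel :: "(nat \<times> nat) set" where
  "meet_rel = up\<^sup>+ \<union> down \<union> Id_on {1..n}"

lemmas tamari_RD = tamari_interval_posetD[OF tamari_R]
lemmas tamari_SD = tamari_interval_posetD[OF tamari_S]

lemma up_less: "(a, b) \<in> up \<Longrightarrow> a < b"
  unfolding up_def Inc_def by auto

lemma up_range: "(a, b) \<in> up \<Longrightarrow> a \<in> {1..n} \<and> b \<in> {1..n}"
  unfolding up_def Inc_def using tamari_RD(1) tamari_SD(1) by auto

lemma down_less: "(a, b) \<in> down \<Longrightarrow> b < a"
  unfolding down_def Dec_def by auto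

lemma down_range: "(a, b) \<in> down \<Longrightarrow> a \<in> {1..n} \<and> b \<in> {1..n}"
  unfolding down_def Dec_def using tamari_RD(1) by auto

lemma up_shrink: "(a, c) \<in> up \<Longrightarrow> a < b \<Longrightarrow> b < c \<Longrightarrow> (b, c) \<in> up"
  unfolding up_def Inc_def using tamari_RD(4) tamari_SD(4) by auto

lemma down_shrink: "(c, a) \<in> down \<Longrightarrow> a < b \<Longrightarrow> b < c \<Longrightarrow> (b, a) \<in> down"
  unfolding down_def Dec_def using tamari_RD(5) tamari_SD(5) by auto

lemma down_trans: "(a, b) \<in> down \<Longrightarrow> (b, c) \<in> down \<Longrightarrow> (a, c) \<in> down"
  unfolding down_def Dec_def using tamari_RD(3) tamari_SD(3) by (auto dest: transD)

lemma up_down: "(a, b) \<in> up \<Longrightarrow> (b, c) \<in> down \<Longrightarrow> a < c \<Longrightarrow> (a, c) \<in> up"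
  unfolding up_def down_def Dec_def Inc_def using tamari_RD(3) tamari_SD(3) by (auto dest: transD)

lemma down_up: "(a, b) \<in> down \<Longrightarrow> (b, c) \<in> up \<Longrightarrow> a < c \<Longrightarrow> (a, c) \<in> up"
  unfolding up_def down_def Dec_def Inc_def using tamari_RD(3) tamari_SD(3) by (auto dest: transD)

lemma up_down_antisym: "(a, b) \<in> up \<Longrightarrow> (b, a) \<notin> down"
  unfolding up_def down_def Dec_def Inc_def using tamari_RD(2) tamari_SD(2) by (auto dest: antisymD)

lemma up_trancl_less: "(a, b) \<in> up\<^sup>+ \<Longrightarrow> a < b"
  by (induction rule: trancl_induct) (auto dest: up_less)

lemma up_trancl_range: "(a, b) \<in> up\<^sup>+ \<Longrightarrow> a \<in> {1..n} \<and> b \<in> {1..n}"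
  by (induction rule: trancl_induct) (auto dest: up_range)

lemma up_trancl_first_step:
  "(a, b) \<in> up\<^sup>+ \<Longrightarrow> \<exists>u. (a, u) \<in> up \<and> (u = b \<or> (u, b) \<in> up\<^sup>+)"
  by (erule converse_tranclE) auto

lemma up_trancl_down_antisym:
  assumes ab: "(a, b) \<in> up\<^sup>+" and ba: "(b, a) \<in> down"
  shows False
proof -
  obtain u where au: "(a, u) \<in> up" and ub: "u = b \<or> (u, b) \<in> up\<^sup>+"
    using up_trancl_first_step[OF ab] by blast
  show False
  proof (cases "u = b")
    case True
    then show ?thesis using au ba up_down_antisym by auto
  next
    case False
    with ub have "u < b" by (auto dest: up_trancl_less)
    with au ba have "(u, a) \<in> down" using down_shrink up_less by blast
    then show ?thesis using au up_down_antisym by auto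
  qed
qed

lemma up_trancl_shrink: "(a, c) \<in> up\<^sup>+ \<Longrightarrow> a < b \<Longrightarrow> b < c \<Longrightarrow> (b, c) \<in> up\<^sup>+"
proof (induction arbitrary: b rule: converse_trancl_induct)
  case (base a)
  then show ?case using up_shrink by blast
next
  case (step a u)
  consider "b < u" | "b = u" | "u < b" by linarith
  then show ?case
  proof cases
    case 1
    then have "(b, u) \<in> up" using up_shrink step by blast
    then show ?thesis using step by auto
  qed (use step in auto)
qed

lemma up_trancl_down:
  "(x, y) \<in> up\<^sup>+ \<Longrightarrow> (y, z) \<in> down \<Longrightarrow> x < z \<Longrightarrow> (x, z) \<in> up\<^sup>+"
proof (induction arbitrary: z rule: trancl_induct)
  case (base y)
  then show ?case using up_down by blast
next
  case (step u y z)
  have "u < y" using step up_less by auto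
  consider "z < u" | "z = u" | "u < z" by linarith
  then show ?case
  proof cases
    case 1
    then have "(u, z) \<in> down" using down_shrink step \<open>u < y\<close> by blast
    then show ?thesis using step 1 by blast
  next
    case 3
    then have "(u, z) \<in> up" using up_down step by blast
    then show ?thesis using step by auto
  qed (use step in auto)
qed

lemma down_up_trancl:
  assumes xy: "(x, y) \<in> down" and yz: "(y, z) \<in> up\<^sup>+" and "x \<noteq> z"
  shows "(x, z) \<in> up\<^sup>+"
proof -
  obtain u where yu: "(y, u) \<in> up" and uz: "u = z \<or> (u, z) \<in> up\<^sup>+"
    using up_trancl_first_step[OF yz] by blast
  consider "u < x" | "u = x" | "x < u" by linarith
  then show ?thesis
  proof cases
    case 1
    then have "(u, y) \<in> down" using down_shrink xy yu up_less by blast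
    then show ?thesis using yu up_down_antisym by auto
  next
    case 3
    then have "(x, u) \<in> up" using down_up xy yu by blast
    then show ?thesis using uz by auto
  qed (use uz \<open>x \<noteq> z\<close> in auto)
qed

lemma Inc_meet_rel: "Inc meet_rel = up\<^sup>+"
  unfolding meet_rel_def Inc_def using up_trancl_less down_less by fastforce

lemma Dec_meet_rel: "Dec meet_rel = down"
  unfolding meet_rel_def Dec_def using up_trancl_less down_less by fastforce

lemma int_rel_meet_rel: "int_rel n meet_rel"
  unfolding int_rel_def meet_rel_def using up_trancl_range down_range by auto

lemma antisym_meet_rel: "antisym meet_rel"
  unfolding antisym_def meet_rel_def
  using up_trancl_down_antisym by (fastforce dest: up_trancl_less down_less)

lemma trans_meet_rel: "trans meet_rel"
proof (rule transI)
  fix x y z assume xy: "(x, y) \<in> meet_rel" and yz: "(y, z) \<in> meet_rel"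
  show "(x, z) \<in> meet_rel"
  proof (cases "x = z")
    case True
    then show ?thesis using xy int_rel_meet_rel unfolding int_rel_def by auto
  next
    case False
    have "(x, z) \<in> up\<^sup>+ \<or> (x, z) \<in> down"
      if "(x, y) \<in> up\<^sup>+ \<union> down" "(y, z) \<in> up\<^sup>+ \<union> down"
      using that
    proof (elim UnE)
      assume "(x, y) \<in> up\<^sup>+" "(y, z) \<in> down"
      moreover have "x < y" using \<open>(x, y) \<in> up\<^sup>+\<close> by (rule up_trancl_less)
      ultimately show ?thesis
        using up_trancl_down down_shrink False by (metis linorder_neqE_nat)
    qed (use False down_up_trancl down_trans in auto)
    then show ?thesis using xy yz False unfolding meet_rel_def by auto
  qed
qed

lemma int_poset_meet_rel: "int_poset n meet_rel"
  unfolding int_poset_def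
  using int_rel_meet_rel antisym_meet_rel trans_meet_rel by blast

lemma tamari_interval_poset_meet_rel: "tamari_interval_poset n meet_rel"
  unfolding tamari_interval_poset_def
proof (intro conjI int_poset_meet_rel allI impI)
  fix a b c :: nat assume abc: "a < b \<and> b < c"
  show "(b, c) \<in> meet_rel" if "(a, c) \<in> meet_rel"
  proof -
    have "(a, c) \<in> up\<^sup>+" using that abc down_less unfolding meet_rel_def by fastforce
    then show ?thesis using up_trancl_shrink abc unfolding meet_rel_def by auto
  qed
  show "(b, a) \<in> meet_rel" if "(c, a) \<in> meet_rel"
  proof -
    have "(c, a) \<in> down" using that abc unfolding meet_rel_def by (auto dest: up_trancl_less)
    then show ?thesis using down_shrink abc unfolding meet_rel_def by auto
  qed
qed

lemma ipos_meet_meet_rel: "ipos_meet n R S meet_rel"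
  unfolding ipos_meet_def
proof (intro conjI int_poset_meet_rel allI impI)
  show "weak_le meet_rel R" "weak_le meet_rel S"
    unfolding weak_le_def Inc_meet_rel Dec_meet_rel up_def down_def by auto
  fix X assume X: "int_poset n X \<and> weak_le X R \<and> weak_le X S"
  then have "up \<subseteq> Inc X" unfolding weak_le_def up_def by blast
  then have "up\<^sup>+ \<subseteq> Inc X"
    using trancl_mono_subset trancl_id trans_Inc X unfolding int_poset_def by metis
  moreover have "Dec X \<subseteq> down" using X unfolding weak_le_def down_def by blast
  ultimately show "weak_le X meet_rel" unfolding weak_le_def Inc_meet_rel Dec_meet_rel by blast
qed

end

definition mirror_rel :: "nat \<Rightarrow> (nat \<times> nat) set \<Rightarrow> (nat \<times> nat) set" where
  "mirror_rel n R = {(a, b). a \<in> {1..n} \<and> b \<in> {1..n} \<and> (n + 1 - a, n + 1 - b) \<in> R}"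

lemma mirror_rel_subset: "mirror_rel n R \<subseteq> {1..n} \<times> {1..n}"
  unfolding mirror_rel_def by auto

lemma mirror_mirror_rel: "R \<subseteq> {1..n} \<times> {1..n} \<Longrightarrow> mirror_rel n (mirror_rel n R) = R"
  unfolding mirror_rel_def by (auto simp: Suc_diff_le) (auto dest!: subsetD)

lemma mirror_rel_mono_iff:
  assumes "A \<subseteq> {1..n} \<times> {1..n}" "B \<subseteq> {1..n} \<times> {1..n}"
  shows "mirror_rel n A \<subseteq> mirror_rel n B \<longleftrightarrow> A \<subseteq> B"
proof
  assume "mirror_rel n A \<subseteq> mirror_rel n B"
  then have "mirror_rel n (mirror_rel n A) \<subseteq> mirror_rel n (mirror_rel n B)"
    unfolding mirror_rel_def by blast
  then show "A \<subseteq> B" using mirror_mirror_rel assms by metis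
qed (auto simp: mirror_rel_def)

lemma Inc_mirror_rel: "Inc (mirror_rel n R) = mirror_rel n (Dec R)"
  unfolding Inc_def Dec_def mirror_rel_def by auto

lemma Dec_mirror_rel: "Dec (mirror_rel n R) = mirror_rel n (Inc R)"
  unfolding Inc_def Dec_def mirror_rel_def by auto

lemma weak_le_mirror_rel_iff:
  assumes "R \<subseteq> {1..n} \<times> {1..n}" "S \<subseteq> {1..n} \<times> {1..n}"
  shows "weak_le (mirror_rel n R) (mirror_rel n S) \<longleftrightarrow> weak_le S R"
proof -
  have "Inc R \<subseteq> {1..n} \<times> {1..n}" "Dec R \<subseteq> {1..n} \<times> {1..n}"
    "Inc S \<subseteq> {1..n} \<times> {1..n}" "Dec S \<subseteq> {1..n} \<times> {1..n}"
    using assms unfolding Inc_def Dec_def by auto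
  then show ?thesis
    unfolding weak_le_def Inc_mirror_rel Dec_mirror_rel by (simp add: mirror_rel_mono_iff conj_commute)
qed

lemma weak_le_mirror_rel_swap:
  assumes A: "A \<subseteq> {1..n} \<times> {1..n}" and B: "B \<subseteq> {1..n} \<times> {1..n}"
  shows "weak_le A (mirror_rel n B) \<longleftrightarrow> weak_le B (mirror_rel n A)"
    and "weak_le (mirror_rel n A) B \<longleftrightarrow> weak_le (mirror_rel n B) A"
  using weak_le_mirror_rel_iff[OF mirror_rel_subset A, of B]
    weak_le_mirror_rel_iff[OF A mirror_rel_subset, of B]
  by (simp_all only: mirror_mirror_rel[OF B])

lemma int_poset_mirror_rel:
  assumes "int_poset n R"
  shows "int_poset n (mirror_rel n R)"
proof -
  have refl: "\<forall>x\<in>{1..n}. (x, x) \<in> R" and "antisym R" "trans R"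
    using assms unfolding int_poset_def int_rel_def by blast+
  have "(x, x) \<in> mirror_rel n R" if "x \<in> {1..n}" for x
  proof -
    have "n + 1 - x \<in> {1..n}" using that by auto
    then show ?thesis using that refl unfolding mirror_rel_def by auto
  qed
  moreover have "antisym (mirror_rel n R)"
    using \<open>antisym R\<close> unfolding antisym_def mirror_rel_def by fastforce
  moreover have "trans (mirror_rel n R)"
    using \<open>trans R\<close> unfolding trans_def mirror_rel_def by blast
  ultimately show ?thesis
    unfolding int_poset_def int_rel_def using mirror_rel_subset by blast
qed

lemma tamari_interval_poset_mirror_rel:
  assumes T: "tamari_interval_poset n T"
  shows "tamari_interval_poset n (mirror_rel n T)"
  unfolding tamari_interval_poset_def
proof (intro conjI allI impI)
  show "int_poset n (mirror_rel n T)"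
    using T int_poset_mirror_rel unfolding tamari_interval_poset_def by blast
  fix a b c :: nat assume abc: "a < b \<and> b < c"
  show "(b, c) \<in> mirror_rel n T" if "(a, c) \<in> mirror_rel n T"
    using that abc tamari_interval_posetD(5)[OF T, of "n + 1 - c" "n + 1 - b" "n + 1 - a"]
    unfolding mirror_rel_def by auto
  show "(b, a) \<in> mirror_rel n T" if "(c, a) \<in> mirror_rel n T"
    using that abc tamari_interval_posetD(4)[OF T, of "n + 1 - c" "n + 1 - b" "n + 1 - a"]
    unfolding mirror_rel_def by auto
qed

lemma ipos_join_mirror_rel:
  assumes meet: "ipos_meet n (mirror_rel n R) (mirror_rel n S) M"
    and R: "R \<subseteq> {1..n} \<times> {1..n}" and S: "S \<subseteq> {1..n} \<times> {1..n}"
  shows "ipos_join n R S (mirror_rel n M)"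
  unfolding ipos_join_def
proof (intro conjI allI impI)
  have M: "M \<subseteq> {1..n} \<times> {1..n}"
    using meet unfolding ipos_meet_def int_poset_def int_rel_def by blast
  show "int_poset n (mirror_rel n M)"
    using meet int_poset_mirror_rel unfolding ipos_meet_def by blast
  show "weak_le R (mirror_rel n M)" "weak_le S (mirror_rel n M)"
    using meet weak_le_mirror_rel_swap(1)[OF R M] weak_le_mirror_rel_swap(1)[OF S M]
    unfolding ipos_meet_def by blast+
  fix X assume X: "int_poset n X \<and> weak_le R X \<and> weak_le S X"
  have X_box: "X \<subseteq> {1..n} \<times> {1..n}" using X unfolding int_poset_def int_rel_def by blast
  have "weak_le (mirror_rel n X) (mirror_rel n R)" "weak_le (mirror_rel n X) (mirror_rel n S)"
    using X weak_le_mirror_rel_iff[OF X_box R] weak_le_mirror_rel_iff[OF X_box S] by blast+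
  then have "weak_le (mirror_rel n X) M"
    using meet X int_poset_mirror_rel unfolding ipos_meet_def by blast
  then show "weak_le (mirror_rel n M) X"
    using weak_le_mirror_rel_swap(2)[OF M X_box] by blast
qed

theorem mainTheorem8:
  fixes n :: nat
  assumes "n \<ge> 1"
  shows "\<forall>R S. tamari_interval_poset n R \<and> tamari_interval_poset n S \<longrightarrow>
           (\<exists>M. ipos_meet n R S M \<and> tamari_interval_poset n M) \<and>
           (\<exists>J. ipos_join n R S J \<and> tamari_interval_poset n J)"
proof (intro allI impI conjI; elim conjE)
  fix R S assume R: "tamari_interval_poset n R" and S: "tamari_interval_poset n S"
  interpret RS: tamari_interval_poset_pair n R S
    using R S by (rule tamari_interval_poset_pair.intro)
  show "\<exists>M. ipos_meet n R S M \<and> tamari_interval_poset n M"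
    using RS.ipos_meet_meet_rel RS.tamari_interval_poset_meet_rel by blast
  interpret mirror_RS: tamari_interval_poset_pair n "mirror_rel n R" "mirror_rel n S"
    using tamari_interval_poset_mirror_rel[OF R] tamari_interval_poset_mirror_rel[OF S]
    by (rule tamari_interval_poset_pair.intro)
  have "ipos_join n R S (mirror_rel n mirror_RS.meet_rel)"
    using mirror_RS.ipos_meet_meet_rel tamari_interval_posetD(1)[OF R]
      tamari_interval_posetD(1)[OF S] by (rule ipos_join_mirror_rel)
  moreover have "tamari_interval_poset n (mirror_rel n mirror_RS.meet_rel)"
    using mirror_RS.tamari_interval_poset_meet_rel by (rule tamari_interval_poset_mirror_rel)
  ultimately show "\<exists>J. ipos_join n R S J \<and> tamari_interval_poset n J" by blast
qed

end
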